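(* Let $J\subset\mathbb{Z}$ and $S\subseteq\mathcal{U}$. Run the Simple algorithm with input $J$, where the elements revealed to it are exactly the elements of $S$, in an arbitrary order. Then the algorithm returns an independent set $P\subseteq S$ such that for every $j\in J$, $$\mathrm{rank}(B_P(j))\ \ge\ \mathrm{rank}\big(B_S(J\setminus\{j\})\cup B_S(j)\big)-\mathrm{rank}\big(B_S(J\setminus\{j\})\big).$$
   Context: $M=(\mathcal{U},\mathcal{I})$ is a matroid; $\mathrm{rank}(X)=\max\{|X'|:X'\subseteq X,X'\in\mathcal{I}\}$ and $\mathrm{span}(X)=\{e\in\mathcal{U}:\mathrm{rank}(X\cup\{e\})=\mathrm{rank}(X)\}$. Every element $e$ has a value $\mathrm{val}(e)\ge 0$; standing assumption: elements of rank $0$ have value $0$, and every element of positive value has value $2^i$ for some $i\in\mathbb{Z}$. For $i\in\mathbb{Z}$ and $X\subseteq\mathcal{U}$, $B_X(i)=\{e\in X:\mathrm{val}(e)=2^i\}$ and for $I\subseteq\mathbb{Z}$, $B_X(I)=\bigcup_{i\in I}B_X(i)$. Logarithms are base 2. Simple algorithm with input $J\subset\mathbb{Z}$: start with $P=\emptyset$; immediately after each element $e$ is revealed, if $\mathrm{val}(e)>0$, $\log\mathrm{val}(e)\in J$ and $e\notin\mathrm{span}(P)$, then add $e$ to $P$. Output $P$. *)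

theory Defs
  imports Complex_Main
begin

definition matroid :: "'a set \<Rightarrow> ('a set \<Rightarrow> bool) \<Rightarrow> bool" where
  "matroid U Ind \<longleftrightarrow> finite U
     \<and> (\<forall>X. Ind X \<longrightarrow> X \<subseteq> U)
     \<and> Ind {}
     \<and> (\<forall>X Y. Ind Y \<and> X \<subseteq> Y \<longrightarrow> Ind X)
     \<and> (\<forall>X Y. Ind X \<and> Ind Y \<and> card X < card Y \<longrightarrow> (\<exists>e\<in>Y - X. Ind (insert e X)))"

definition mrank :: "('a set \<Rightarrow> bool) \<Rightarrow> 'a set \<Rightarrow> nat" where
  "mrank Ind X = Max {card X' | X'. X' \<subseteq> X \<and> Ind X'}"

definition mspan :: "'a set \<Rightarrow> ('a set \<Rightarrow> bool) \<Rightarrow> 'a set \<Rightarrow> 'a set" where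
  "mspan U Ind X = {e \<in> U. mrank Ind (X \<union> {e}) = mrank Ind X}"

definition Bk :: "('a \<Rightarrow> real) \<Rightarrow> 'a set \<Rightarrow> int \<Rightarrow> 'a set" where
  "Bk val X i = {e \<in> X. val e = 2 powr (real_of_int i)}"

definition BI :: "('a \<Rightarrow> real) \<Rightarrow> 'a set \<Rightarrow> int set \<Rightarrow> 'a set" where
  "BI val X I = (\<Union>i\<in>I. Bk val X i)"

definition simple_step :: "'a set \<Rightarrow> ('a set \<Rightarrow> bool) \<Rightarrow> ('a \<Rightarrow> real) \<Rightarrow> int set
     \<Rightarrow> 'a set \<Rightarrow> 'a \<Rightarrow> 'a set" where
  "simple_step U Ind val J P e =
     (if val e > 0 \<and> log 2 (val e) \<in> real_of_int ` J \<and> e \<notin> mspan U Ind P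
      then insert e P else P)"

definition simple_alg :: "'a set \<Rightarrow> ('a set \<Rightarrow> bool) \<Rightarrow> ('a \<Rightarrow> real) \<Rightarrow> int set
     \<Rightarrow> 'a list \<Rightarrow> 'a set" where
  "simple_alg U Ind val J xs = foldl (simple_step U Ind val J) {} xs"

end

theory Submission
  imports Defs
begin

text \<open>The Simple algorithm is the greedy algorithm run on the elements of value class in \<open>J\<close>,
  so its output \<open>P\<close> is a basis of \<open>B\<^sub>S(J)\<close>. For \<open>j \<in> J\<close> write \<open>B\<^sub>S(J) = A \<union> B\<close> with
  \<open>A = B\<^sub>S(J - {j})\<close> and \<open>B = B\<^sub>S(j)\<close>. Then \<open>P - B\<close> is an independent subset of \<open>A\<close> and
  \<open>P \<inter> B = B\<^sub>P(j)\<close> is independent, so \<open>rank(A \<union> B) = |P| \<le> rank A + rank B\<^sub>P(j)\<close>.\<close>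

lemma matroid_finite: "matroid U Ind \<Longrightarrow> finite U"
  unfolding matroid_def by (elim conjE)

lemma matroid_indep_subset: "matroid U Ind \<Longrightarrow> Ind X \<Longrightarrow> X \<subseteq> U"
  unfolding matroid_def by (elim conjE) (erule allE, erule mp)

lemma matroid_indep_empty: "matroid U Ind \<Longrightarrow> Ind {}"
  unfolding matroid_def by (elim conjE)

lemma matroid_indep_mono: "matroid U Ind \<Longrightarrow> Ind Y \<Longrightarrow> X \<subseteq> Y \<Longrightarrow> Ind X"
  unfolding matroid_def by (elim conjE) (erule allE, erule allE, erule mp, rule conjI)

lemma matroid_augment:
  "matroid U Ind \<Longrightarrow> Ind X \<Longrightarrow> Ind Y \<Longrightarrow> card X < card Y \<Longrightarrow> \<exists>e\<in>Y - X. Ind (insert e X)"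
  unfolding matroid_def by (elim conjE) (erule allE, erule allE, erule mp, intro conjI)

lemma matroid_indep_finite: "matroid U Ind \<Longrightarrow> Ind X \<Longrightarrow> finite X"
  by (rule finite_subset[OF matroid_indep_subset matroid_finite])

lemma finite_indep_cards:
  assumes "matroid U Ind"
  shows "finite {card X' | X'. X' \<subseteq> X \<and> Ind X'}"
proof -
  have "{card X' | X'. X' \<subseteq> X \<and> Ind X'} \<subseteq> card ` Pow U"
    using matroid_indep_subset[OF assms] by blast
  moreover have "finite (card ` Pow U)"
    using matroid_finite[OF assms] by simp
  ultimately show ?thesis by (rule finite_subset)
qed

lemma card_le_mrank:
  assumes "matroid U Ind" "X' \<subseteq> X" "Ind X'"
  shows "card X' \<le> mrank Ind X"
  unfolding mrank_def using finite_indep_cards[OF assms(1), of X] assms(2,3)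
  by (intro Max_ge) auto

lemma mrank_attained:
  assumes "matroid U Ind"
  obtains X' where "X' \<subseteq> X" "Ind X'" "card X' = mrank Ind X"
proof -
  have "{card X' | X'. X' \<subseteq> X \<and> Ind X'} \<noteq> {}"
    using matroid_indep_empty[OF assms] by blast
  then have "mrank Ind X \<in> {card X' | X'. X' \<subseteq> X \<and> Ind X'}"
    unfolding mrank_def by (rule Max_in[OF finite_indep_cards[OF assms]])
  then show ?thesis using that by auto
qed

definition is_basis_of :: "('a set \<Rightarrow> bool) \<Rightarrow> 'a set \<Rightarrow> 'a set \<Rightarrow> bool" where
  "is_basis_of Ind X P \<longleftrightarrow> Ind P \<and> P \<subseteq> X \<and> (\<forall>e\<in>X - P. \<not> Ind (insert e P))"

lemma mrank_basis:
  assumes M: "matroid U Ind" and P: "is_basis_of Ind X P"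
  shows "mrank Ind X = card P"
proof -
  have indP: "Ind P" and PX: "P \<subseteq> X" and maxP: "\<forall>e\<in>X - P. \<not> Ind (insert e P)"
    using P unfolding is_basis_of_def by auto
  obtain Y where Y: "Y \<subseteq> X" "Ind Y" "card Y = mrank Ind X"
    using mrank_attained[OF M] .
  have "\<not> card P < card Y"
  proof
    assume "card P < card Y"
    then obtain e where "e \<in> Y - P" "Ind (insert e P)"
      using matroid_augment[OF M indP Y(2)] by blast
    then show False using maxP Y(1) by blast
  qed
  moreover have "card P \<le> mrank Ind X"
    using card_le_mrank[OF M PX indP] .
  ultimately show ?thesis using Y(3) by linarith
qed

lemma mrank_indep: "matroid U Ind \<Longrightarrow> Ind P \<Longrightarrow> mrank Ind P = card P"
  by (erule mrank_basis) (simp add: is_basis_of_def)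

lemma mem_mspan_iff:
  assumes M: "matroid U Ind" and P: "Ind P" and e: "e \<in> U"
  shows "e \<in> mspan U Ind P \<longleftrightarrow> e \<in> P \<or> \<not> Ind (insert e P)"
proof (cases "e \<in> P \<or> \<not> Ind (insert e P)")
  case True
  have "mrank Ind (P \<union> {e}) = card P"
    by (rule mrank_basis[OF M]) (use P True in \<open>auto simp: is_basis_of_def\<close>)
  then show ?thesis using True e mrank_indep[OF M P] unfolding mspan_def by simp
next
  case False
  then have "mrank Ind (P \<union> {e}) = Suc (card P)"
    using mrank_indep[OF M, of "insert e P"] matroid_indep_finite[OF M P] by simp
  then show ?thesis using False mrank_indep[OF M P] unfolding mspan_def by simp
qed

lemma mem_BI_iff: "e \<in> BI val X J \<longleftrightarrow> e \<in> X \<and> (\<exists>j\<in>J. val e = 2 powr real_of_int j)"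
  unfolding BI_def Bk_def by blast

lemma BI_empty: "BI val {} J = {}"
  by (simp add: BI_def Bk_def)

lemma BI_set_Cons: "BI val (set (x # xs)) J = BI val {x} J \<union> BI val (set xs) J"
  by (auto simp: mem_BI_iff)

lemma log2_in_of_int_image_iff:
  "val e > 0 \<and> log 2 (val e) \<in> real_of_int ` J \<longleftrightarrow> (\<exists>j\<in>J. val e = 2 powr real_of_int j)"
proof
  assume "val e > 0 \<and> log 2 (val e) \<in> real_of_int ` J"
  then obtain j where "j \<in> J" "val e > 0" "log 2 (val e) = real_of_int j" by blast
  moreover have "val e = 2 powr real_of_int j"
    using powr_log_cancel[of 2 "val e"] calculation by simp
  ultimately show "\<exists>j\<in>J. val e = 2 powr real_of_int j" by blast
qed auto

lemma simple_step_eq: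
  "simple_step U Ind val J P e
     = (if e \<in> BI val {e} J \<and> e \<notin> mspan U Ind P then insert e P else P)"
  unfolding simple_step_def mem_BI_iff log2_in_of_int_image_iff[symmetric] by simp

lemma simple_step_basis:
  assumes M: "matroid U Ind" and P: "Ind P" and e: "e \<in> U"
  shows "P \<subseteq> simple_step U Ind val J P e
    \<and> is_basis_of Ind (P \<union> BI val {e} J) (simple_step U Ind val J P e)"
proof -
  have "BI val {e} J \<subseteq> {e}" by (auto simp: mem_BI_iff)
  then show ?thesis
    using P mem_mspan_iff[OF M P e] unfolding simple_step_eq is_basis_of_def
    by (cases "e \<in> BI val {e} J") auto
qed

lemma foldl_simple_step_basis:
  assumes M: "matroid U Ind" and "Ind P" "set xs \<subseteq> U"
  shows "P \<subseteq> foldl (simple_step U Ind val J) P xs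
    \<and> is_basis_of Ind (P \<union> BI val (set xs) J) (foldl (simple_step U Ind val J) P xs)"
  using assms(2,3)
proof (induction xs arbitrary: P)
  case Nil
  then show ?case unfolding is_basis_of_def by (simp add: BI_empty)
next
  case (Cons x xs)
  define P' where "P' = simple_step U Ind val J P x"
  define Q where "Q = foldl (simple_step U Ind val J) P' xs"
  have x: "x \<in> U" and xs: "set xs \<subseteq> U"
    using Cons.prems(2) by simp_all
  note step = simple_step_basis[OF M Cons.prems(1) x, of val J, folded P'_def]
  have P'_basis: "is_basis_of Ind (P \<union> BI val {x} J) P'"
    using step by (rule conjunct2)
  then have "Ind P'"
    by (simp add: is_basis_of_def)
  note IH = Cons.IH[OF this xs, folded Q_def]
  have P'Q: "P' \<subseteq> Q" and Q_basis: "is_basis_of Ind (P' \<union> BI val (set xs) J) Q"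
    using IH by (rule conjunct1, rule conjunct2)
  \<comment> \<open>an element rejected by the first step stays dependent on the larger set \<open>Q \<supseteq> P'\<close>\<close>
  have "\<not> Ind (insert e Q)" if e: "e \<in> P \<union> BI val {x} J" "e \<notin> Q" for e
  proof
    assume "Ind (insert e Q)"
    then have "Ind (insert e P')"
      by (rule matroid_indep_mono[OF M]) (use P'Q in blast)
    moreover have "e \<notin> P'" using e(2) P'Q by blast
    ultimately show False using P'_basis e(1) by (simp add: is_basis_of_def)
  qed
  then have "is_basis_of Ind (P \<union> BI val (set (x # xs)) J) Q"
    using P'_basis Q_basis unfolding BI_set_Cons is_basis_of_def by blast
  moreover have "P \<subseteq> Q"
    using step P'Q by blast
  ultimately show ?case
    unfolding Q_def P'_def by simp
qed

lemma simple_alg_basis: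
  assumes "matroid U Ind" "set xs \<subseteq> U"
  shows "is_basis_of Ind (BI val (set xs) J) (simple_alg U Ind val J xs)"
  using foldl_simple_step_basis[OF assms(1) matroid_indep_empty[OF assms(1)] assms(2)]
  unfolding simple_alg_def by simp

lemma mrank_union_le_basis:
  assumes M: "matroid U Ind" and P: "is_basis_of Ind (A \<union> B) P"
  shows "mrank Ind (A \<union> B) \<le> mrank Ind A + mrank Ind (P \<inter> B)"
proof -
  have indP: "Ind P" and PAB: "P \<subseteq> A \<union> B"
    using P by (simp_all add: is_basis_of_def)
  have "mrank Ind (A \<union> B) = card (P \<inter> B) + card (P - B)"
    using mrank_basis[OF M P] card_Int_Diff[OF matroid_indep_finite[OF M indP]] by simp
  also have "card (P \<inter> B) = mrank Ind (P \<inter> B)"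
    using mrank_indep[OF M] matroid_indep_mono[OF M indP] by simp
  also have "card (P - B) \<le> mrank Ind A"
    using PAB by (intro card_le_mrank[OF M] matroid_indep_mono[OF M indP]) blast+
  finally show ?thesis by simp
qed

lemma BI_subset: "BI val S J \<subseteq> S"
  by (auto simp: mem_BI_iff)

lemma BI_split: "j \<in> J \<Longrightarrow> BI val S J = BI val S (J - {j}) \<union> Bk val S j"
  by (auto simp: mem_BI_iff Bk_def)

lemma Bk_subset_eq: "P \<subseteq> S \<Longrightarrow> Bk val P j = P \<inter> Bk val S j"
  unfolding Bk_def by blast

theorem lemma1:
  fixes U :: "'a set" and Ind :: "'a set \<Rightarrow> bool" and val :: "'a \<Rightarrow> real"
    and J :: "int set" and S :: "'a set" and xs :: "'a list"
  assumes M: "matroid U Ind"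
    and val_nonneg: "\<And>e. e \<in> U \<Longrightarrow> val e \<ge> 0"
    and rank0: "\<And>e. e \<in> U \<Longrightarrow> mrank Ind {e} = 0 \<Longrightarrow> val e = 0"
    and pow2: "\<And>e. e \<in> U \<Longrightarrow> val e > 0 \<Longrightarrow> \<exists>i::int. val e = 2 powr (real_of_int i)"
    and S: "S \<subseteq> U"
    and order: "set xs = S" "distinct xs"
  shows "Ind (simple_alg U Ind val J xs)
       \<and> simple_alg U Ind val J xs \<subseteq> S
       \<and> (\<forall>j\<in>J. int (mrank Ind (Bk val (simple_alg U Ind val J xs) j))
              \<ge> int (mrank Ind (BI val S (J - {j}) \<union> Bk val S j))
                - int (mrank Ind (BI val S (J - {j}))))"
proof -
  define P where "P = simple_alg U Ind val J xs"
  have basis: "is_basis_of Ind (BI val S J) P"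
    using simple_alg_basis[OF M] S order(1) unfolding P_def by blast
  then have indP: "Ind P" and PS: "P \<subseteq> S"
    using BI_subset[of val S J] by (auto simp: is_basis_of_def)
  have rank_bound: "mrank Ind (BI val S (J - {j}) \<union> Bk val S j)
      \<le> mrank Ind (BI val S (J - {j})) + mrank Ind (Bk val P j)" if j: "j \<in> J" for j
  proof -
    have "is_basis_of Ind (BI val S (J - {j}) \<union> Bk val S j) P"
      using basis by (simp only: BI_split[OF j])
    from mrank_union_le_basis[OF M this] show ?thesis
      by (simp only: Bk_subset_eq[OF PS])
  qed
  show ?thesis
    unfolding P_def[symmetric]
  proof (intro conjI ballI indP PS)
    fix j assume "j \<in> J"
    then show "int (mrank Ind (Bk val P j))
        \<ge> int (mrank Ind (BI val S (J - {j}) \<union> Bk val S j)) - int (mrank Ind (BI val S (J - {j})))"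
      using rank_bound by fastforce
  qed
qed

end
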